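(* Let $c_1>0$ be a sufficiently small absolute constant and $K=\exp(c_1 s)$. There exists a set $V^*\subseteq\frac1{\sqrt d}\mathcal{H}_d$ with $|V^*|\le 16sK\le 2^s$ such that the set $$\mathcal{A}_{\mathsf{nice}}:=\{\mathbf{A}\in\mathcal{A}_{\mathsf{suc}}:|\mathcal{N}(\mathsf{O}^{\mathbf{M}_\mathbf{A}}(\mathbf{A},V^* ),d^{-8})|\ge 2^{s/\log d}\}$$ has size at least $\frac18\cdot 2^{d^2/2}$.
   Context: Setting: $d$ large, $\delta\in(0,1)$, $k=d^{1-\delta-o(1)}$, $s=d^{1-\delta/2}\log^2 d$, $\xi=2\exp(-\log^5 d)$, $\xi'=\sqrt d\xi$, $\mathcal{H}_d=\{-1,1\}^d$, $\mathbb{S}^d$ the unit sphere. A fixed deterministic $(k,n)$-protocol: on $\mathbf{A}\in\{-1,1\}^{(d/2)\times d}$ Alice sends $\mathbf{M}_\mathbf{A}\in\{0,1\}^{kd}$; after receiving $\mathbf{v}\in\frac1{\sqrt d}\mathcal{H}_d$ she sends $\mathbf{R}_{\mathbf{A},\mathbf{v}}\in(\mathsf{row}(\mathbf{A})\cup\{\mathsf{nil}\})^n$; Bob outputs a unit vector $\mathbf{x}_{\mathbf{M},\mathbf{v},\mathbf{R}}\in\mathbb{S}^d$, defined for all $\mathbf{M}$, $\mathbf{v}$, $\mathbf{R}\in(\{-1,1\}^d\cup\{\mathsf{nil}\})^n$; $\mathbf{x}_{\mathbf{A},\mathbf{v}}=\mathbf{x}_{\mathbf{M}_\mathbf{A},\mathbf{v},\mathbf{R}_{\mathbf{A},\mathbf{v}}}$.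 Success on $(\mathbf{A},\mathbf{v})$: $\|\mathbf{A}\mathbf{x}_{\mathbf{A},\mathbf{v}}\|_\infty\le\xi'$ and $|\langle\mathbf{v},\mathbf{x}_{\mathbf{A},\mathbf{v}}\rangle|\ge\sqrt{s/d}$; the protocol succeeds with probability at least $1/2$ over uniform $(\mathbf{A},\mathbf{v})$. $\mathcal{A}_{\mathsf{suc}}$: matrices $\mathbf{A}$ on which it succeeds with probability at least $1/4$ over uniform $\mathbf{v}$. Table $\mathsf{T}^{\mathbf{M}}(\mathbf{B},V)=\{\mathbf{x}_{\mathbf{M},\mathbf{v},\mathbf{R}}:\mathbf{v}\in V,\ \text{each entry of }\mathbf{R}\text{ is }\mathsf{nil}\text{ or a row of }\mathbf{B}\}$; orthogonal entries $\mathsf{O}^{\mathbf{M}}(\mathbf{B},V)=\{\mathbf{x}\in\mathsf{T}^{\mathbf{M}}(\mathbf{B},V):\|\mathbf{B}\mathbf{x}\|_\infty\le\xi'\}$. $\mathcal{N}(X,\alpha)$: a largest subset of $X$ with pairwise distances at least $\alpha$. *)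

theory Defs
  imports Complex_Main
begin

text \<open>Vectors in R^d are functions nat => real that vanish outside {0..<d};
  a (d/2) x d matrix is given by its rows A 0, ..., A (d div 2 - 1).\<close>

type_synonym vec = "nat \<Rightarrow> real"
type_synonym mat = "nat \<Rightarrow> vec"
type_synonym msg = "bool list"
type_synonym resp = "vec option list"   \<comment> \<open>None = nil\<close>

definition hcube :: "nat \<Rightarrow> vec set" where
  "hcube d = {x. (\<forall>i<d. x i = 1 \<or> x i = -1) \<and> (\<forall>i\<ge>d. x i = 0)}"

definition scube :: "nat \<Rightarrow> vec set" where
  "scube d = (\<lambda>x i. x i / sqrt (real d)) ` hcube d"

definition mats :: "nat \<Rightarrow> mat set" where
  "mats d = {A. (\<forall>j<d div 2. A j \<in> hcube d) \<and> (\<forall>j\<ge>d div 2. A j = (\<lambda>_. 0))}"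

definition rows :: "nat \<Rightarrow> mat \<Rightarrow> vec set" where
  "rows d A = A ` {..<d div 2}"

definition ip :: "nat \<Rightarrow> vec \<Rightarrow> vec \<Rightarrow> real" where
  "ip d u v = (\<Sum>i<d. u i * v i)"

definition enorm :: "nat \<Rightarrow> vec \<Rightarrow> real" where
  "enorm d x = sqrt (ip d x x)"

definition unit_sphere :: "nat \<Rightarrow> vec set" where
  "unit_sphere d = {x. enorm d x = 1 \<and> (\<forall>i\<ge>d. x i = 0)}"

definition orth_ok :: "nat \<Rightarrow> real \<Rightarrow> mat \<Rightarrow> vec \<Rightarrow> bool" where
  "orth_ok d eps B x = (\<forall>j<d div 2. \<bar>ip d (B j) x\<bar> \<le> eps)"

definition responses :: "nat \<Rightarrow> vec set \<Rightarrow> resp set" where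
  "responses n Rws = {R. length R = n \<and> (\<forall>r\<in>set R. r = None \<or> (\<exists>y\<in>Rws. r = Some y))}"

definition table :: "nat \<Rightarrow> nat \<Rightarrow> (msg \<Rightarrow> vec \<Rightarrow> resp \<Rightarrow> vec) \<Rightarrow> msg \<Rightarrow> mat \<Rightarrow> vec set \<Rightarrow> vec set" where
  "table d n X M B V = {X M v R | v R. v \<in> V \<and> R \<in> responses n (rows d B)}"

definition orth_entries :: "nat \<Rightarrow> nat \<Rightarrow> real \<Rightarrow> (msg \<Rightarrow> vec \<Rightarrow> resp \<Rightarrow> vec) \<Rightarrow> msg \<Rightarrow> mat \<Rightarrow> vec set \<Rightarrow> vec set" where
  "orth_entries d n eps X M B V = {x \<in> table d n X M B V. orth_ok d eps B x}"

definition separated :: "nat \<Rightarrow> real \<Rightarrow> vec set \<Rightarrow> bool" where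
  "separated d \<alpha> Y = (\<forall>x\<in>Y. \<forall>y\<in>Y. x \<noteq> y \<longrightarrow> enorm d (\<lambda>i. x i - y i) \<ge> \<alpha>)"

definition packing_size :: "nat \<Rightarrow> vec set \<Rightarrow> real \<Rightarrow> nat" where
  "packing_size d S \<alpha> = Max {card Y | Y. Y \<subseteq> S \<and> finite Y \<and> separated d \<alpha> Y}"

definition is_protocol :: "nat \<Rightarrow> nat \<Rightarrow> nat \<Rightarrow> (mat \<Rightarrow> msg) \<Rightarrow> (mat \<Rightarrow> vec \<Rightarrow> resp)
    \<Rightarrow> (msg \<Rightarrow> vec \<Rightarrow> resp \<Rightarrow> vec) \<Rightarrow> bool" where
  "is_protocol d k n Mf Rf X \<longleftrightarrow>
     (\<forall>A\<in>mats d. length (Mf A) = k * d) \<and>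
     (\<forall>A\<in>mats d. \<forall>v\<in>scube d. Rf A v \<in> responses n (rows d A)) \<and>
     (\<forall>M v R. length M = k * d \<longrightarrow> v \<in> scube d \<longrightarrow> R \<in> responses n (hcube d)
         \<longrightarrow> X M v R \<in> unit_sphere d)"

definition succeeds :: "nat \<Rightarrow> real \<Rightarrow> real \<Rightarrow> (mat \<Rightarrow> msg) \<Rightarrow> (mat \<Rightarrow> vec \<Rightarrow> resp)
    \<Rightarrow> (msg \<Rightarrow> vec \<Rightarrow> resp \<Rightarrow> vec) \<Rightarrow> mat \<Rightarrow> vec \<Rightarrow> bool" where
  "succeeds d eps s Mf Rf X A v \<longleftrightarrow>
     (let x = X (Mf A) v (Rf A v) in orth_ok d eps A x \<and> \<bar>ip d v x\<bar> \<ge> sqrt (s / real d))"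

definition protocol_succeeds :: "nat \<Rightarrow> real \<Rightarrow> real \<Rightarrow> (mat \<Rightarrow> msg) \<Rightarrow> (mat \<Rightarrow> vec \<Rightarrow> resp)
    \<Rightarrow> (msg \<Rightarrow> vec \<Rightarrow> resp \<Rightarrow> vec) \<Rightarrow> bool" where
  "protocol_succeeds d eps s Mf Rf X \<longleftrightarrow>
     real (card {(A, v) \<in> mats d \<times> scube d. succeeds d eps s Mf Rf X A v})
       \<ge> 1/2 * real (card (mats d \<times> scube d))"

definition A_suc :: "nat \<Rightarrow> real \<Rightarrow> real \<Rightarrow> (mat \<Rightarrow> msg) \<Rightarrow> (mat \<Rightarrow> vec \<Rightarrow> resp)
    \<Rightarrow> (msg \<Rightarrow> vec \<Rightarrow> resp \<Rightarrow> vec) \<Rightarrow> mat set" where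
  "A_suc d eps s Mf Rf X =
     {A \<in> mats d. real (card {v \<in> scube d. succeeds d eps s Mf Rf X A v}) \<ge> 1/4 * real (card (scube d))}"

text \<open>parameters (log = natural logarithm)\<close>
definition s_par :: "real \<Rightarrow> nat \<Rightarrow> real" where
  "s_par \<delta> d = real d powr (1 - \<delta>/2) * (ln (real d))^2"

definition xi :: "nat \<Rightarrow> real" where
  "xi d = 2 * exp (- ((ln (real d))^5))"

definition xi' :: "nat \<Rightarrow> real" where
  "xi' d = sqrt (real d) * xi d"

end

(*
  Call a vector v good for a matrix A if the protocol succeeds on (A, v); a successful matrix has at
  least a quarter of all v good. Run through a list of 20 P random sample vectors and greedily keep
  the output x_{A,v} of each good v that is d^-8-far from the outputs kept so far. If x_{A,v} is close
  to a kept output y, then |<v, y>| >= sqrt (s/d) - d^-8, since |<v, x_{A,v}>| >= sqrt (s/d) and v is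
  a unit vector; by Hoeffding's inequality this happens for an exp (-s/8) fraction of v per y. So
  while fewer than P outputs are kept, a fifth of all v are accepted, and the greedy packing stops
  short of P points for at most a quarter of the sample lists. Averaging over the successful
  matrices, which are a third of all matrices, one list V works for three quarters of them. The kept
  outputs lie in the orthogonal part of the table for V, so its packing number is at least P.
*)
theory Submission
  imports Defs "HOL-Analysis.Convex" "HOL-Library.FuncSet"
begin

section \<open>Tail bounds for Rademacher sums\<close>

lemma power_two_mult_fact_le_fact_double: "2 ^ n * fact n \<le> (fact (2 * n) :: real)"
proof (induction n)
  case (Suc n)
  have "2 ^ Suc n * fact (Suc n) = (2 * real n + 2) * (2 ^ n * (fact n :: real))"
    by (simp add: algebra_simps)
  also have "\<dots> \<le> (2 * real n + 2) * ((2 * real n + 1) * fact (2 * n))"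
    using Suc.IH by (intro mult_left_mono) (auto intro: order_trans)
  also have "\<dots> = fact (2 * Suc n)"
    by (simp add: algebra_simps)
  finally show ?case .
qed simp

text \<open>Compare the Taylor series term by term: \<open>x ^ (2n) / (2n)! \<le> (x\<^sup>2/2) ^ n / n!\<close>.\<close>
lemma cosh_le_exp_half_square: "cosh x \<le> exp ((x :: real)\<^sup>2 / 2)"
proof -
  have "(\<lambda>n. if even n then x ^ n /\<^sub>R fact n else 0) = (\<lambda>n. if even n then x ^ n / fact n else 0)"
    by (rule ext) (simp add: field_simps)
  then have "(\<lambda>n. if even n then x ^ n / fact n else 0) sums cosh x"
    using cosh_converges[of x] by simp
  then have cosh: "(\<lambda>n. x ^ (2 * n) / fact (2 * n)) sums cosh x"
    by (subst (asm) sums_mono_reindex[of "\<lambda>n. 2 * n", symmetric])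
       (auto simp: strict_mono_def elim!: evenE)
  have exp: "(\<lambda>n. (x\<^sup>2 / 2) ^ n / fact n) sums exp (x\<^sup>2 / 2)"
    using exp_converges[of "x\<^sup>2 / 2"] by (simp add: field_simps)
  have "x ^ (2 * n) / fact (2 * n) \<le> (x\<^sup>2 / 2) ^ n / fact n" for n
  proof -
    have "x ^ (2 * n) / fact (2 * n) \<le> x ^ (2 * n) / (2 ^ n * fact n)"
      by (rule divide_left_mono) (auto simp: power_two_mult_fact_le_fact_double power_mult)
    then show ?thesis by (simp add: power_divide power_mult)
  qed
  then show ?thesis using sums_le[OF _ cosh exp] by blast
qed

lemma hcube_0: "hcube 0 = {\<lambda>_. 0}"
  by (auto simp: hcube_def)

lemma hcube_Suc: "hcube (Suc d) = (\<lambda>(w, b). w(d := b)) ` (hcube d \<times> {1, -1})"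
proof (intro equalityI subsetI)
  fix x assume x: "x \<in> hcube (Suc d)"
  then have "(x(d := 0), x d) \<in> hcube d \<times> {1, -1}"
    by (auto simp: hcube_def)
  then show "x \<in> (\<lambda>(w, b). w(d := b)) ` (hcube d \<times> {1, -1})"
    by (rule rev_image_eqI) simp
qed (auto simp: hcube_def less_Suc_eq)

lemma inj_on_hcube_update: "inj_on (\<lambda>(w, b). w(d := b)) (hcube d \<times> B)"
proof (rule inj_onI, clarsimp)
  fix w b v c assume "w \<in> hcube d" "v \<in> hcube d" and eq: "w(d := b) = v(d := c)"
  have "w i = v i" for i
  proof (cases "i = d")
    case False
    then show ?thesis using fun_cong[OF eq, of i] by simp
  qed (use \<open>w \<in> hcube d\<close> \<open>v \<in> hcube d\<close> in \<open>simp add: hcube_def\<close>)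
  then show "w = v \<and> b = c"
    using fun_cong[OF eq, of d] by auto
qed

lemma finite_hcube: "finite (hcube d)"
  by (induction d) (simp_all add: hcube_0 hcube_Suc)

lemma card_hcube: "card (hcube d) = 2 ^ d"
proof (induction d)
  case (Suc d)
  have "card (hcube (Suc d)) = card (hcube d \<times> {1 :: real, -1})"
    unfolding hcube_Suc by (rule card_image[OF inj_on_hcube_update])
  then show ?case
    using Suc by (simp add: card_cartesian_product)
qed (simp add: hcube_0)

lemma sum_hcube_exp_le:
  "(\<Sum>w\<in>hcube d. exp (l * (\<Sum>i<d. w i * y i))) \<le> 2 ^ d * exp (l\<^sup>2 * (\<Sum>i<d. (y i)\<^sup>2) / 2)"
proof (induction d)
  case (Suc d)
  let ?F = "\<lambda>w. exp (l * (\<Sum>i<d. w i * y i))"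
  have update: "(\<Sum>i<d. (w(d := b)) i * y i) = (\<Sum>i<d. w i * y i)" for w b
    by (rule sum.cong) auto
  have "(\<Sum>w\<in>hcube (Suc d). exp (l * (\<Sum>i<Suc d. w i * y i)))
      = (\<Sum>w\<in>hcube d. \<Sum>b\<in>{1 :: real, -1}. exp (l * (\<Sum>i<Suc d. (w(d := b)) i * y i)))"
    unfolding hcube_Suc sum.reindex[OF inj_on_hcube_update] sum.cartesian_product
    by (rule sum.cong) auto
  also have "\<dots> = (\<Sum>w\<in>hcube d. ?F w * (2 * cosh (l * y d)))"
    by (simp add: update distrib_left exp_add cosh_def)
  also have "\<dots> \<le> (\<Sum>w\<in>hcube d. ?F w) * (2 * exp ((l * y d)\<^sup>2 / 2))"
    unfolding sum_distrib_right
    by (intro sum_mono mult_left_mono) (auto simp: cosh_le_exp_half_square)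
  also have "\<dots> \<le> 2 ^ d * exp (l\<^sup>2 * (\<Sum>i<d. (y i)\<^sup>2) / 2) * (2 * exp ((l * y d)\<^sup>2 / 2))"
    by (rule mult_right_mono[OF Suc]) simp
  also have "\<dots> = 2 ^ Suc d * exp (l\<^sup>2 * (\<Sum>i<Suc d. (y i)\<^sup>2) / 2)"
    by (simp add: exp_add[symmetric] algebra_simps power_mult_distrib add_divide_distrib)
  finally show ?case .
qed (simp add: hcube_0)

lemma card_hcube_sum_ge_le:
  assumes "(\<Sum>i<d. (y i)\<^sup>2) \<le> 1" "0 \<le> a"
  shows "card {w \<in> hcube d. a \<le> (\<Sum>i<d. w i * y i)} \<le> 2 ^ d * exp (- (a\<^sup>2) / 2)"
proof -
  let ?S = "{w \<in> hcube d. a \<le> (\<Sum>i<d. w i * y i)}"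
  have "card ?S * exp (a\<^sup>2) = (\<Sum>w\<in>?S. exp (a * a))"
    by (simp add: power2_eq_square)
  also have "\<dots> \<le> (\<Sum>w\<in>?S. exp (a * (\<Sum>i<d. w i * y i)))"
    using assms(2) by (intro sum_mono) (simp add: mult_left_mono)
  also have "\<dots> \<le> (\<Sum>w\<in>hcube d. exp (a * (\<Sum>i<d. w i * y i)))"
    by (intro sum_mono2 finite_hcube) auto
  also have "\<dots> \<le> 2 ^ d * exp (a\<^sup>2 * (\<Sum>i<d. (y i)\<^sup>2) / 2)"
    by (rule sum_hcube_exp_le)
  also have "\<dots> \<le> 2 ^ d * exp (a\<^sup>2 / 2)"
    using assms by (auto intro!: mult_left_mono divide_right_mono mult_left_le)
  also have "\<dots> = 2 ^ d * exp (- (a\<^sup>2) / 2) * exp (a\<^sup>2)"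
    by (simp add: exp_add[symmetric])
  finally show ?thesis by simp
qed

lemma card_hcube_abs_sum_ge_le:
  assumes "(\<Sum>i<d. (y i)\<^sup>2) \<le> 1" "0 \<le> a"
  shows "card {w \<in> hcube d. a \<le> \<bar>\<Sum>i<d. w i * y i\<bar>} \<le> 2 * 2 ^ d * exp (- (a\<^sup>2) / 2)"
proof -
  let ?G = "\<lambda>y. {w \<in> hcube d. a \<le> (\<Sum>i<d. w i * y i)}"
  have "{w \<in> hcube d. a \<le> \<bar>\<Sum>i<d. w i * y i\<bar>} \<subseteq> ?G y \<union> ?G (\<lambda>i. - y i)"
    by (auto simp: sum_negf abs_if split: if_splits)
  then have "card {w \<in> hcube d. a \<le> \<bar>\<Sum>i<d. w i * y i\<bar>} \<le> card (?G y \<union> ?G (\<lambda>i. - y i))"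
    by (intro card_mono) (simp_all add: finite_hcube)
  also have "\<dots> \<le> card (?G y) + card (?G (\<lambda>i. - y i))"
    by (rule card_Un_le)
  finally have "real (card {w \<in> hcube d. a \<le> \<bar>\<Sum>i<d. w i * y i\<bar>})
      \<le> real (card (?G y)) + real (card (?G (\<lambda>i. - y i)))"
    by linarith
  moreover have "real (card (?G (\<lambda>i. - y i))) \<le> 2 ^ d * exp (- (a\<^sup>2) / 2)"
    using assms by (intro card_hcube_sum_ge_le) simp_all
  ultimately show ?thesis
    using card_hcube_sum_ge_le[OF assms] by linarith
qed

lemma finite_scube: "finite (scube d)"
  by (simp add: scube_def finite_hcube)

lemma card_scube:
  assumes "0 < d" shows "card (scube d) = 2 ^ d"
proof -
  have "inj_on (\<lambda>w i. w i / sqrt (real d)) (hcube d)"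
    using assms by (intro inj_onI) (auto simp: fun_eq_iff)
  then show ?thesis
    by (simp add: scube_def card_image card_hcube)
qed

lemma enorm_scube:
  assumes "0 < d" "v \<in> scube d" shows "enorm d v = 1"
proof -
  obtain w where w: "w \<in> hcube d" "v = (\<lambda>i. w i / sqrt (real d))"
    using assms(2) by (auto simp: scube_def)
  have "ip d v v = (\<Sum>i<d. 1 / real d)"
    unfolding ip_def w(2) using w(1) assms(1)
    by (intro sum.cong) (auto simp: hcube_def field_simps)
  then show ?thesis
    using assms(1) by (simp add: enorm_def)
qed

lemma sum_square_unit_sphere: "y \<in> unit_sphere d \<Longrightarrow> (\<Sum>i<d. (y i)\<^sup>2) = 1"
  by (simp add: unit_sphere_def enorm_def ip_def power2_eq_square)

lemma card_scube_abs_ip_ge_le: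
  assumes "0 < d" "(\<Sum>i<d. (y i)\<^sup>2) \<le> 1" "0 \<le> t"
  shows "card {v \<in> scube d. t \<le> \<bar>ip d v y\<bar>} \<le> 2 * 2 ^ d * exp (- (real d * t\<^sup>2) / 2)"
proof -
  let ?sc = "\<lambda>w i. w i / sqrt (real d)"
  have sqrt_pos: "0 < sqrt (real d)"
    using assms(1) by simp
  have "ip d (?sc w) y = (\<Sum>i<d. w i * y i) / sqrt (real d)" for w
    by (simp add: ip_def sum_divide_distrib)
  then have "t \<le> \<bar>ip d (?sc w) y\<bar> \<longleftrightarrow> t * sqrt (real d) \<le> \<bar>\<Sum>i<d. w i * y i\<bar>" for w
    using sqrt_pos by (simp add: abs_div pos_le_divide_eq)
  then have "{v \<in> scube d. t \<le> \<bar>ip d v y\<bar>} = ?sc ` {w \<in> hcube d. t * sqrt (real d) \<le> \<bar>\<Sum>i<d. w i * y i\<bar>}"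
    by (auto simp: scube_def)
  then have "card {v \<in> scube d. t \<le> \<bar>ip d v y\<bar>} \<le> card {w \<in> hcube d. t * sqrt (real d) \<le> \<bar>\<Sum>i<d. w i * y i\<bar>}"
    by (simp add: card_image_le finite_hcube)
  also have "\<dots> \<le> 2 * 2 ^ d * exp (- ((t * sqrt (real d))\<^sup>2) / 2)"
    using assms by (intro card_hcube_abs_sum_ge_le) auto
  finally show ?thesis
    by (simp add: power_mult_distrib mult.commute)
qed

lemma abs_ip_le_enorm_mult: "\<bar>ip d u z\<bar> \<le> enorm d u * enorm d z"
proof -
  have "(ip d u z)\<^sup>2 \<le> ip d u u * ip d z z"
    unfolding ip_def using Cauchy_Schwarz_ineq_sum[of u z "{..<d}"] by (simp add: power2_eq_square)
  then show ?thesis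
    by (metis enorm_def real_sqrt_abs real_sqrt_le_mono real_sqrt_mult)
qed

lemma ip_diff_right: "ip d v (\<lambda>i. x i - y i) = ip d v x - ip d v y"
  by (simp add: ip_def algebra_simps sum_subtractf)

section \<open>Averaging and greedy packings\<close>

lemma card_dense_rows_ge:
  fixes P :: "'a \<Rightarrow> 'b \<Rightarrow> bool"
  assumes "finite M" "finite S"
    and half: "real (card (M \<times> S)) / 2 \<le> card {(a, b) \<in> M \<times> S. P a b}"
  shows "real (card M) / 3 \<le> card {a \<in> M. real (card S) / 4 \<le> card {b \<in> S. P a b}}"
proof (cases "S = {}")
  case False
  define G where "G = {a \<in> M. real (card S) / 4 \<le> card {b \<in> S. P a b}}"
  have "G \<subseteq> M"
    by (auto simp: G_def)
  have "{(a, b) \<in> M \<times> S. P a b} = Sigma M (\<lambda>a. {b \<in> S. P a b})"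
    by auto
  then have "real (card (M \<times> S)) / 2 \<le> (\<Sum>a\<in>M. real (card {b \<in> S. P a b}))"
    using half assms(1,2) by (simp add: card_SigmaI)
  also have "\<dots> \<le> (\<Sum>a\<in>M. if a \<in> G then real (card S) else real (card S) / 4)"
    using assms(2) by (intro sum_mono) (auto simp: G_def card_mono)
  also have "\<dots> = real (card G) * card S + real (card (M - G)) * (card S / 4)"
    using assms(1) \<open>G \<subseteq> M\<close> by (simp add: sum.If_cases Int_absorb1 Diff_eq[symmetric])
  also have "real (card (M - G)) = real (card M) - card G"
    using assms(1) \<open>G \<subseteq> M\<close> by (simp add: card_Diff_subset of_nat_diff card_mono finite_subset)
  finally have "real (card (M \<times> S)) / 2
      \<le> real (card G) * card S + (real (card M) * card S - real (card G) * card S) / 4"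
    by (simp add: left_diff_distrib)
  moreover have "real (card (M \<times> S)) = real (card M) * card S"
    by (simp add: card_cartesian_product)
  ultimately have "real (card M) * card S \<le> 3 * (real (card G) * card S)"
    by (simp add: field_simps)
  then show ?thesis
    using False assms(2) by (simp add: G_def card_gt_0_iff)
qed simp

lemma real_card_filter_eq_sum: "finite B \<Longrightarrow> real (card {x \<in> B. P x}) = (\<Sum>x\<in>B. if P x then 1 else 0)"
  by (simp add: sum.If_cases Int_def)

lemma exists_column_few_hits:
  fixes F :: "'a \<Rightarrow> 'b \<Rightarrow> bool" and q :: real
  assumes "finite A" "finite L" "L \<noteq> {}"
    and rows: "\<And>a. a \<in> A \<Longrightarrow> real (card {x \<in> L. F a x}) \<le> q * card L"
  shows "\<exists>x\<in>L. real (card {a \<in> A. F a x}) \<le> q * card A"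
proof (rule ccontr)
  assume "\<not> ?thesis"
  then have "(\<Sum>x\<in>L. q * card A) < (\<Sum>x\<in>L. real (card {a \<in> A. F a x}))"
    using assms(2,3) by (intro sum_strict_mono) auto
  also have "\<dots> = (\<Sum>a\<in>A. real (card {x \<in> L. F a x}))"
    using assms(1,2) by (simp add: real_card_filter_eq_sum sum.swap[of _ A L])
  also have "\<dots> \<le> (\<Sum>a\<in>A. q * card L)"
    using rows by (rule sum_mono)
  finally show False
    by (simp add: mult_ac)
qed

definition greedy_insert :: "('a \<Rightarrow> 'b set \<Rightarrow> bool) \<Rightarrow> ('a \<Rightarrow> 'b) \<Rightarrow> 'a \<Rightarrow> 'b set \<Rightarrow> 'b set" where
  "greedy_insert acc f v Y = (if acc v Y then insert (f v) Y else Y)"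

lemma fold_greedy_insert_invariant:
  assumes "\<And>Y v. I Y \<Longrightarrow> acc v Y \<Longrightarrow> I (insert (f v) Y)" "I Y"
  shows "I (fold (greedy_insert acc f) vs Y)"
  using assms(2) by (induction vs arbitrary: Y) (auto simp: greedy_insert_def assms(1))

lemma mem_fold_greedy_insertD:
  "x \<in> fold (greedy_insert acc f) vs Y \<Longrightarrow> x \<in> Y \<or> (\<exists>v\<in>set vs. \<exists>Z. acc v Z \<and> x = f v)"
  by (induction vs arbitrary: Y) (fastforce simp: greedy_insert_def split: if_splits)+

lemma card_le_card_fold_greedy_insert:
  "finite Y \<Longrightarrow> card Y \<le> card (fold (greedy_insert acc f) vs Y)"
proof (induction vs arbitrary: Y)
  case (Cons v vs)
  have "finite (greedy_insert acc f v Y)"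
    using Cons.prems by (simp add: greedy_insert_def)
  then have "card (greedy_insert acc f v Y) \<le> card (fold (greedy_insert acc f) vs (greedy_insert acc f v Y))"
    by (rule Cons.IH)
  moreover have "card Y \<le> card (greedy_insert acc f v Y)"
    using Cons.prems by (auto simp: greedy_insert_def card_insert_le)
  ultimately show ?case by simp
qed simp

lemma card_lists_Suc_filter:
  assumes "finite \<Omega>"
  shows "card {vs. set vs \<subseteq> \<Omega> \<and> length vs = Suc N \<and> Q vs}
       = (\<Sum>v\<in>\<Omega>. card {vs. set vs \<subseteq> \<Omega> \<and> length vs = N \<and> Q (v # vs)})"
proof -
  have "{vs. set vs \<subseteq> \<Omega> \<and> length vs = Suc N \<and> Q vs}
      = (\<lambda>(v, vs). v # vs) ` (SIGMA v:\<Omega>. {vs. set vs \<subseteq> \<Omega> \<and> length vs = N \<and> Q (v # vs)})"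
    by (auto simp: length_Suc_conv)
  moreover have "finite {vs. set vs \<subseteq> \<Omega> \<and> length vs = N \<and> Q (v # vs)}" for v
    by (rule finite_subset[OF _ finite_lists_length_eq[OF assms, of N]]) auto
  moreover have "inj_on (\<lambda>(v, vs). v # vs) X" for X :: "('a \<times> 'a list) set"
    by (rule inj_onI) auto
  ultimately show ?thesis
    using assms by (simp add: card_image card_SigmaI)
qed

text \<open>Every accepted sample halves the potential \<open>2 ^ (P - card Y)\<close>, and while the packing has
  fewer than \<open>P\<close> points an \<open>\<alpha>\<close>-fraction of the samples are accepted; so the potential, summed
  over all sample lists, shrinks by the factor \<open>1 - \<alpha>/2\<close> per sample.\<close>
lemma card_lists_fold_greedy_insert_small_le:
  fixes \<Omega> :: "'a set" and \<alpha> :: real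
  assumes "finite \<Omega>" "0 \<le> \<alpha>" "\<alpha> \<le> 1"
    and dense: "\<And>Y. I Y \<Longrightarrow> card Y < P \<Longrightarrow> \<alpha> * card \<Omega> \<le> card {v \<in> \<Omega>. acc v Y}"
    and grow: "\<And>Y v. I Y \<Longrightarrow> acc v Y \<Longrightarrow> I (insert (f v) Y) \<and> f v \<notin> Y"
    and fin: "\<And>Y. I Y \<Longrightarrow> finite Y"
    and "I Y"
  shows "card {vs. set vs \<subseteq> \<Omega> \<and> length vs = N \<and> card (fold (greedy_insert acc f) vs Y) < P}
           \<le> real (card \<Omega>) ^ N * 2 ^ (P - card Y) * (1 - \<alpha> / 2) ^ N"
  using \<open>I Y\<close>
proof (induction N arbitrary: Y)
  case 0
  have "card {vs. set vs \<subseteq> \<Omega> \<and> length vs = 0 \<and> card (fold (greedy_insert acc f) vs Y) < P}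
      \<le> card {[] :: 'a list}"
    by (intro card_mono) auto
  then show ?case
    by (simp add: one_le_power[THEN order_trans[rotated]])
next
  case (Suc N)
  let ?small = "\<lambda>N Y. card {vs. set vs \<subseteq> \<Omega> \<and> length vs = N \<and> card (fold (greedy_insert acc f) vs Y) < P}"
  define B where "B = real (card \<Omega>) ^ N * 2 ^ (P - card Y) * (1 - \<alpha> / 2) ^ N"
  have "B \<ge> 0"
    using assms(3) by (simp add: B_def)
  show ?case
  proof (cases "card Y < P")
    case False
    then have "P \<le> card (fold (greedy_insert acc f) vs Y)" for vs
      using card_le_card_fold_greedy_insert[OF fin[OF Suc.prems]] by (meson le_trans not_less)
    then have "?small (Suc N) Y = 0"
      by (simp add: not_less[symmetric])
    moreover have "0 \<le> real (card \<Omega>) ^ Suc N * 2 ^ (P - card Y) * (1 - \<alpha> / 2) ^ Suc N"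
      using assms(3) by simp
    ultimately show ?thesis
      by simp
  next
    case True
    define G where "G = {v \<in> \<Omega>. acc v Y}"
    have "real (?small (Suc N) Y) = (\<Sum>v\<in>\<Omega>. real (?small N (greedy_insert acc f v Y)))"
      by (simp add: card_lists_Suc_filter[OF assms(1)])
    also have "\<dots> \<le> (\<Sum>v\<in>\<Omega>. B - (if v \<in> G then B / 2 else 0))"
    proof (intro sum_mono)
      fix v assume "v \<in> \<Omega>"
      show "real (?small N (greedy_insert acc f v Y)) \<le> B - (if v \<in> G then B / 2 else 0)"
      proof (cases "v \<in> G")
        case True
        then have "acc v Y"
          by (simp add: G_def)
        then have "greedy_insert acc f v Y = insert (f v) Y"
          by (simp add: greedy_insert_def)
        moreover have "I (insert (f v) Y)" "card (insert (f v) Y) = Suc (card Y)"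
          using grow[OF Suc.prems \<open>acc v Y\<close>] fin[OF Suc.prems] by auto
        moreover have "(2 :: real) ^ (P - card Y) = 2 * 2 ^ (P - Suc (card Y))"
          using \<open>card Y < P\<close> by (simp add: power_Suc[symmetric] Suc_diff_Suc)
        ultimately show ?thesis
          using Suc.IH[of "insert (f v) Y"] True by (simp add: B_def)
      next
        case False
        with \<open>v \<in> \<Omega>\<close> have "greedy_insert acc f v Y = Y"
          by (simp add: greedy_insert_def G_def)
        then show ?thesis
          using Suc.IH[OF Suc.prems] False by (simp add: B_def)
      qed
    qed
    also have "\<dots> = card \<Omega> * B - card G * (B / 2)"
      using assms(1) by (simp add: sum_subtractf sum.If_cases Int_def G_def)
    also have "\<dots> \<le> card \<Omega> * B - \<alpha> * card \<Omega> * (B / 2)"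
      using dense[OF Suc.prems True] \<open>B \<ge> 0\<close> unfolding G_def
      by (intro diff_left_mono mult_right_mono) auto
    also have "\<dots> = real (card \<Omega>) ^ Suc N * 2 ^ (P - card Y) * (1 - \<alpha> / 2) ^ Suc N"
      by (simp add: B_def algebra_simps)
    finally show ?thesis .
  qed
qed

lemma s_par_ge_sqrt:
  assumes "\<delta> \<le> 1" "1 \<le> ln (real d)"
  shows "sqrt (real d) \<le> s_par \<delta> d"
proof -
  have "d \<noteq> 0"
    using assms(2) by (intro notI) simp
  then have "1 \<le> real d"
    using assms(2) ln_le_minus_one[of "real d"] by simp
  then have "sqrt (real d) \<le> real d powr (1 - \<delta> / 2)"
    using assms(1) by (auto simp: powr_half_sqrt[symmetric] intro!: powr_mono)
  also have "\<dots> \<le> real d powr (1 - \<delta> / 2) * (ln (real d))\<^sup>2"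
    using assms(2) by (simp add: one_le_power mult_le_cancel_left1)
  finally show ?thesis
    by (simp add: s_par_def)
qed

lemma half_le_ln_two: "1 / 2 \<le> ln (2 :: real)"
proof -
  have "exp (1 / 2 :: real) ^ 2 = exp 1"
    by (simp add: exp_double[symmetric])
  also have "\<dots> \<le> 2 ^ 2"
    using exp_le by simp
  finally have "exp (1 / 2 :: real) \<le> 2"
    by (rule power2_le_imp_le) simp
  then show ?thesis
    by (subst ln_ge_iff) simp_all
qed

lemma sixteen_mult_exp_le_two_powr:
  fixes s c :: real
  assumes "2000 \<le> s" "c \<le> 1 / 10"
  shows "16 * s * exp (c * s) \<le> 2 powr s"
proof -
  have "16 * s \<le> (2 * s / 5)\<^sup>2 / 2"
    using assms(1) by (simp add: power2_eq_square field_simps)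
  also have "\<dots> \<le> exp (2 * s / 5)"
    using exp_lower_Taylor_quadratic[of "2 * s / 5"] assms(1) by simp
  finally have "16 * s * exp (c * s) \<le> exp (2 * s / 5) * exp (s / 10)"
    using assms by (intro mult_mono) auto
  also have "\<dots> = exp (s / 2)"
    by (simp add: exp_add[symmetric])
  also have "\<dots> \<le> exp (s * ln 2)"
    using half_le_ln_two assms(1) by simp
  finally show ?thesis
    by (simp add: powr_def mult.commute)
qed

lemma two_powr_divide_le_exp:
  fixes s a L :: real
  assumes "0 \<le> s" "0 < a" "a \<le> L"
  shows "2 powr (s / L) \<le> exp (s / a)"
proof -
  have "s / L * ln 2 \<le> s / L"
    using assms ln_2_less_1 by (intro mult_left_le) auto
  also have "\<dots> \<le> s / a"
    using assms by (intro divide_left_mono) auto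
  finally show ?thesis
    by (simp add: powr_def mult.commute)
qed

lemma twenty_mult_le_sixteen_mult_exp:
  fixes s c :: real
  assumes "2000 \<le> s" "0 < c" "x \<le> exp (c * s / 2) + 1"
  shows "20 * x \<le> 16 * s * exp (c * s)"
proof -
  have "1 \<le> exp (c * s / 2)" "exp (c * s / 2) \<le> exp (c * s)"
    using assms by simp_all
  then have "20 * x \<le> 40 * exp (c * s)"
    using assms(3) by linarith
  also have "\<dots> \<le> 16 * s * exp (c * s)"
    using assms(1) by (intro mult_right_mono) auto
  finally show ?thesis .
qed

lemma mult_two_exp_le_one_twentieth:
  fixes s :: real
  assumes "2000 \<le> s" "x \<le> exp (s / 16) + 1"
  shows "x * (2 * exp (- s / 8)) \<le> 1 / 20"
proof -
  have "80 \<le> exp (s / 16)"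
    using exp_ge_add_one_self[of "s / 16"] assms(1) by linarith
  then have "x * (2 * exp (- s / 8)) \<le> 2 * exp (s / 16) * (2 * exp (- s / 8))"
    using assms(2) by (intro mult_right_mono) auto
  also have "\<dots> = 4 / exp (s / 16)"
    using exp_add[of "s / 16" "- s / 8"] by (simp add: exp_minus field_simps)
  also have "\<dots> \<le> 1 / 20"
    using \<open>80 \<le> exp (s / 16)\<close> by (simp add: field_simps)
  finally show ?thesis .
qed

lemma powr_neg_eight_le_half_sqrt:
  assumes "2 \<le> d" "1 \<le> s"
  shows "real d powr (-8) \<le> sqrt (s / d) / 2"
proof -
  have "2 * real d \<le> real d ^ 2"
    using assms(1) by (simp add: power2_eq_square)
  also have "\<dots> \<le> real d ^ 8"
    using assms(1) by (intro power_increasing) simp_all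
  finally have "2 * real d \<le> real d ^ 8" .
  then have "real d powr (-8) \<le> 1 / d / 2"
    using assms(1) by (simp add: powr_minus powr_realpow field_simps)
  also have "1 / d \<le> sqrt (s / d)"
  proof (rule real_le_rsqrt)
    have "(1 / real d)\<^sup>2 \<le> 1 / d"
      using assms(1) by (simp add: power2_eq_square field_simps)
    also have "\<dots> \<le> s / d"
      using assms by (simp add: divide_right_mono)
    finally show "(1 / real d)\<^sup>2 \<le> s / d" .
  qed
  finally show ?thesis
    by simp
qed

lemma div_eight_le_sqrt_diff_square:
  assumes "0 < d" "0 \<le> s" "0 \<le> r" "r \<le> sqrt (s / d) / 2"
  shows "s / 8 \<le> d * (sqrt (s / d) - r)\<^sup>2 / 2"
proof -
  have "(sqrt (s / d) / 2)\<^sup>2 \<le> (sqrt (s / d) - r)\<^sup>2"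
    using assms by (intro power_mono) auto
  then show ?thesis
    using assms by (simp add: power_divide field_simps)
qed

lemma two_power_mult_nine_tenths_power_le: "1 \<le> P \<Longrightarrow> (2 :: real) ^ P * (9 / 10) ^ (20 * P) \<le> 1 / 4"
proof -
  assume "1 \<le> P"
  have "(2 :: real) ^ P * (9 / 10) ^ (20 * P) = (2 * (9 / 10) ^ 20) ^ P"
    by (simp add: power_mult power_mult_distrib)
  also have "\<dots> \<le> (2 * (9 / 10) ^ 20) ^ 1"
    using \<open>1 \<le> P\<close> by (intro power_decreasing) (simp_all add: power_divide)
  also have "\<dots> \<le> 1 / 4"
    by (simp add: power_divide)
  finally show ?thesis .
qed

section \<open>Packings of protocol outputs\<close>

lemma finite_responses: "finite R \<Longrightarrow> finite (responses n R)"
  by (rule finite_subset[OF _ finite_lists_length_eq[of "insert None (Some ` R)" n]])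
     (auto simp: responses_def)

lemma finite_orth_entries: "finite V \<Longrightarrow> finite (orth_entries d n eps X M B V)"
proof -
  assume "finite V"
  moreover have "table d n X M B V = (\<lambda>(v, R). X M v R) ` (V \<times> responses n (rows d B))"
    by (auto simp: table_def)
  ultimately have "finite (table d n X M B V)"
    by (simp add: finite_responses rows_def)
  then show ?thesis
    by (simp add: orth_entries_def)
qed

lemma card_le_packing_size:
  assumes "finite S" "Y \<subseteq> S" "separated d \<alpha> Y"
  shows "card Y \<le> packing_size d S \<alpha>"
proof -
  have "{card Y | Y. Y \<subseteq> S \<and> finite Y \<and> separated d \<alpha> Y} \<subseteq> card ` Pow S"
    by auto
  then have "finite {card Y | Y. Y \<subseteq> S \<and> finite Y \<and> separated d \<alpha> Y}"
    using assms(1) by (meson finite_Pow_iff finite_imageI finite_subset)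
  moreover have "card Y \<in> {card Y | Y. Y \<subseteq> S \<and> finite Y \<and> separated d \<alpha> Y}"
    using assms finite_subset by blast
  ultimately show ?thesis
    unfolding packing_size_def by (rule Max_ge)
qed

lemma card_mats: "card (mats d) = 2 ^ (d * (d div 2))"
  and finite_mats: "finite (mats d)"
proof -
  let ?ext = "\<lambda>F j. if j < d div 2 then F j else (\<lambda>_. 0 :: real)"
  have "mats d = ?ext ` PiE {..<d div 2} (\<lambda>_. hcube d)"
  proof (intro equalityI subsetI)
    fix A assume A: "A \<in> mats d"
    then have "A = ?ext (restrict A {..<d div 2})"
      by (auto simp: mats_def)
    moreover have "restrict A {..<d div 2} \<in> PiE {..<d div 2} (\<lambda>_. hcube d)"
      using A by (simp add: mats_def)
    ultimately show "A \<in> ?ext ` PiE {..<d div 2} (\<lambda>_. hcube d)"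
      by (rule image_eqI)
  next
    fix A assume "A \<in> ?ext ` PiE {..<d div 2} (\<lambda>_. hcube d)"
    then obtain F where "F \<in> PiE {..<d div 2} (\<lambda>_. hcube d)" "A = ?ext F"
      by blast
    then show "A \<in> mats d"
      by (auto simp: mats_def)
  qed
  moreover have "inj_on ?ext (PiE {..<d div 2} (\<lambda>_. hcube d))"
  proof (rule inj_onI)
    fix F G assume FG: "F \<in> PiE {..<d div 2} (\<lambda>_. hcube d)" "G \<in> PiE {..<d div 2} (\<lambda>_. hcube d)"
      and eq: "?ext F = ?ext G"
    show "F = G"
    proof (rule PiE_ext[OF FG])
      fix i assume "i \<in> {..<d div 2}"
      then show "F i = G i"
        using fun_cong[OF eq, of i] by simp
    qed
  qed
  ultimately show "card (mats d) = 2 ^ (d * (d div 2))" "finite (mats d)"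
    by (simp_all add: card_image card_PiE finite_PiE finite_hcube card_hcube power_mult)
qed

lemma card_mats_even: "even d \<Longrightarrow> real (card (mats d)) = 2 powr (real d ^ 2 / 2)"
  by (auto simp: card_mats power2_eq_square powr_realpow[symmetric] mult.assoc elim!: evenE)

definition far_from :: "nat \<Rightarrow> real \<Rightarrow> vec \<Rightarrow> vec set \<Rightarrow> bool" where
  "far_from d r x Y \<longleftrightarrow> (\<forall>y\<in>Y. r \<le> enorm d (\<lambda>i. x i - y i))"

lemma enorm_diff_commute: "enorm d (\<lambda>i. x i - y i) = enorm d (\<lambda>i. y i - x i)"
  by (simp add: enorm_def ip_def algebra_simps)

lemma separated_insert_far_from:
  assumes "separated d r Y" "far_from d r x Y"
  shows "separated d r (insert x Y)"
  unfolding separated_def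
proof (intro ballI impI)
  fix y z assume "y \<in> insert x Y" "z \<in> insert x Y" "y \<noteq> z"
  then consider "y \<in> Y" "z \<in> Y" | "y = x" "z \<in> Y" | "y \<in> Y" "z = x"
    by blast
  then show "r \<le> enorm d (\<lambda>i. y i - z i)"
  proof cases
    case 1
    then show ?thesis using assms(1) \<open>y \<noteq> z\<close> by (simp add: separated_def)
  next
    case 2
    then show ?thesis using assms(2) by (simp add: far_from_def)
  next
    case 3
    then show ?thesis using assms(2) enorm_diff_commute[of d y x] by (simp add: far_from_def)
  qed
qed

lemma not_mem_far_from: "0 < r \<Longrightarrow> far_from d r x Y \<Longrightarrow> x \<notin> Y"
  unfolding far_from_def by (fastforce simp: enorm_def ip_def)

locale protocol_instance =
  fixes d k n :: nat and Mf :: "mat \<Rightarrow> msg" and Rf :: "mat \<Rightarrow> vec \<Rightarrow> resp"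
    and X :: "msg \<Rightarrow> vec \<Rightarrow> resp \<Rightarrow> vec" and eps s :: real
  assumes protocol: "is_protocol d k n Mf Rf X" and dim_pos: "0 < d"
begin

definition bob_output :: "mat \<Rightarrow> vec \<Rightarrow> vec" where
  "bob_output A v = X (Mf A) v (Rf A v)"

lemma response_in_responses: "A \<in> mats d \<Longrightarrow> v \<in> scube d \<Longrightarrow> Rf A v \<in> responses n (rows d A)"
  using protocol by (simp add: is_protocol_def)

lemma bob_output_in_unit_sphere:
  assumes "A \<in> mats d" "v \<in> scube d"
  shows "bob_output A v \<in> unit_sphere d"
proof -
  have "rows d A \<subseteq> hcube d"
    using assms(1) by (auto simp: rows_def mats_def)
  then have "Rf A v \<in> responses n (hcube d)"
    using response_in_responses[OF assms] by (auto simp: responses_def)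
  then show ?thesis
    using protocol assms by (simp add: is_protocol_def bob_output_def)
qed

lemma card_succeeds_near_le:
  assumes "finite Y" "Y \<subseteq> unit_sphere d" "0 \<le> r" "r \<le> sqrt (s / d)"
  shows "card {v \<in> scube d. succeeds d eps s Mf Rf X A v \<and> \<not> far_from d r (bob_output A v) Y}
    \<le> card Y * (2 * 2 ^ d * exp (- (d * (sqrt (s / d) - r)\<^sup>2) / 2))"
proof -
  let ?\<tau> = "sqrt (s / d) - r"
  let ?Near = "\<lambda>y. {v \<in> scube d. ?\<tau> \<le> \<bar>ip d v y\<bar>}"
  have near: "{v \<in> scube d. succeeds d eps s Mf Rf X A v \<and> \<not> far_from d r (bob_output A v) Y}
      \<subseteq> (\<Union>y\<in>Y. ?Near y)"
  proof safe
    fix v assume v: "v \<in> scube d" "succeeds d eps s Mf Rf X A v" "\<not> far_from d r (bob_output A v) Y"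
    then obtain y where y: "y \<in> Y" "enorm d (\<lambda>i. bob_output A v i - y i) < r"
      by (auto simp: far_from_def not_le)
    have "\<bar>ip d v (bob_output A v) - ip d v y\<bar> \<le> enorm d v * enorm d (\<lambda>i. bob_output A v i - y i)"
      using abs_ip_le_enorm_mult[of d v "\<lambda>i. bob_output A v i - y i"] by (simp add: ip_diff_right)
    also have "\<dots> < r"
      using y(2) enorm_scube[OF dim_pos v(1)] by simp
    finally have "\<bar>ip d v (bob_output A v) - ip d v y\<bar> < r" .
    moreover have "sqrt (s / d) \<le> \<bar>ip d v (bob_output A v)\<bar>"
      using v(2) by (simp add: succeeds_def bob_output_def Let_def)
    ultimately have "?\<tau> \<le> \<bar>ip d v y\<bar>"
      using abs_triangle_ineq2[of "ip d v (bob_output A v)" "ip d v y"] by linarith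
    then show "v \<in> (\<Union>y\<in>Y. ?Near y)"
      using y(1) v(1) by blast
  qed
  have "card {v \<in> scube d. succeeds d eps s Mf Rf X A v \<and> \<not> far_from d r (bob_output A v) Y}
      \<le> (\<Sum>y\<in>Y. card (?Near y))"
    by (rule order_trans[OF card_mono[OF _ near] card_UN_le[OF assms(1)]]) (simp add: finite_scube assms(1))
  then have "real (card {v \<in> scube d. succeeds d eps s Mf Rf X A v \<and> \<not> far_from d r (bob_output A v) Y})
      \<le> (\<Sum>y\<in>Y. real (card (?Near y)))"
    unfolding of_nat_sum[symmetric] by (rule of_nat_mono)
  also have "\<dots> \<le> (\<Sum>y\<in>Y. 2 * 2 ^ d * exp (- (d * ?\<tau>\<^sup>2) / 2))"
    using assms dim_pos sum_square_unit_sphere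
    by (intro sum_mono card_scube_abs_ip_ge_le) auto
  finally show ?thesis
    by simp
qed

definition accept :: "real \<Rightarrow> mat \<Rightarrow> vec \<Rightarrow> vec set \<Rightarrow> bool" where
  "accept r A v Y \<longleftrightarrow> v \<in> scube d \<and> succeeds d eps s Mf Rf X A v \<and> far_from d r (bob_output A v) Y"

lemma card_accept_ge:
  assumes "A \<in> A_suc d eps s Mf Rf X" "finite Y" "Y \<subseteq> unit_sphere d" "0 \<le> r" "r \<le> sqrt (s / d)"
    and small: "card Y * (2 * exp (- (d * (sqrt (s / d) - r)\<^sup>2) / 2)) \<le> 1 / 20"
  shows "card (scube d) / 5 \<le> card {v \<in> scube d. accept r A v Y}"
proof -
  let ?S = "{v \<in> scube d. succeeds d eps s Mf Rf X A v}"
  let ?Near = "{v \<in> scube d. succeeds d eps s Mf Rf X A v \<and> \<not> far_from d r (bob_output A v) Y}"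
  have split: "?S \<subseteq> {v \<in> scube d. accept r A v Y} \<union> ?Near"
    by (auto simp: accept_def)
  have "card ?S \<le> card {v \<in> scube d. accept r A v Y} + card ?Near"
    by (rule order_trans[OF card_mono[OF _ split] card_Un_le]) (simp add: finite_scube)
  moreover have "card (scube d) / 4 \<le> card ?S"
    using assms(1) by (simp add: A_suc_def)
  moreover have "card ?Near \<le> card Y * (2 * exp (- (d * (sqrt (s / d) - r)\<^sup>2) / 2)) * 2 ^ d"
    using card_succeeds_near_le[OF assms(2-5)] by (simp add: mult_ac)
  moreover have "\<dots> \<le> card (scube d) / 20"
    using mult_right_mono[OF small, of "2 ^ d"] by (simp add: card_scube[OF dim_pos])
  ultimately show ?thesis
    by linarith
qed

definition greedy_packing :: "real \<Rightarrow> mat \<Rightarrow> vec list \<Rightarrow> vec set" where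
  "greedy_packing r A vs = fold (greedy_insert (accept r A) (bob_output A)) vs {}"

lemma accept_insert:
  assumes "A \<in> mats d" "accept r A v Y" "Y \<subseteq> unit_sphere d" "separated d r Y"
  shows "insert (bob_output A v) Y \<subseteq> unit_sphere d" "separated d r (insert (bob_output A v) Y)"
proof -
  have "bob_output A v \<in> unit_sphere d" "far_from d r (bob_output A v) Y"
    using assms(2) bob_output_in_unit_sphere[OF assms(1)] by (simp_all add: accept_def)
  then show "insert (bob_output A v) Y \<subseteq> unit_sphere d" "separated d r (insert (bob_output A v) Y)"
    using assms(3,4) separated_insert_far_from by simp_all
qed

lemma greedy_packing_invariant:
  assumes "A \<in> mats d"
  shows "finite (greedy_packing r A vs) \<and> greedy_packing r A vs \<subseteq> unit_sphere d
    \<and> separated d r (greedy_packing r A vs)"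
  unfolding greedy_packing_def
proof (rule fold_greedy_insert_invariant)
  fix Y v assume "finite Y \<and> Y \<subseteq> unit_sphere d \<and> separated d r Y" "accept r A v Y"
  then show "finite (insert (bob_output A v) Y) \<and> insert (bob_output A v) Y \<subseteq> unit_sphere d
      \<and> separated d r (insert (bob_output A v) Y)"
    using accept_insert[OF assms] by simp
qed (simp add: separated_def)

lemma card_small_greedy_packing_le:
  assumes "A \<in> A_suc d eps s Mf Rf X" "0 < r" "r \<le> sqrt (s / d)" "1 \<le> P"
    and small: "P * (2 * exp (- (d * (sqrt (s / d) - r)\<^sup>2) / 2)) \<le> 1 / 20"
  shows "card {vs. set vs \<subseteq> scube d \<and> length vs = 20 * P \<and> card (greedy_packing r A vs) < P}
    \<le> real (card (scube d)) ^ (20 * P) / 4"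
proof -
  have A: "A \<in> mats d"
    using assms(1) by (simp add: A_suc_def)
  define I where "I Y \<longleftrightarrow> finite Y \<and> Y \<subseteq> unit_sphere d \<and> separated d r Y" for Y
  have dense: "1 / 5 * card (scube d) \<le> card {v \<in> scube d. accept r A v Y}"
    if "I Y" "card Y < P" for Y
  proof -
    have "card Y * (2 * exp (- (d * (sqrt (s / d) - r)\<^sup>2) / 2))
        \<le> P * (2 * exp (- (d * (sqrt (s / d) - r)\<^sup>2) / 2))"
      using that(2) by (intro mult_right_mono) simp_all
    then have "card Y * (2 * exp (- (d * (sqrt (s / d) - r)\<^sup>2) / 2)) \<le> 1 / 20"
      using small by linarith
    then show ?thesis
      using card_accept_ge[OF assms(1), of Y r] that(1) assms(2,3) unfolding I_def by simp
  qed
  have grow: "I (insert (bob_output A v) Y) \<and> bob_output A v \<notin> Y"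
    if "I Y" "accept r A v Y" for Y v
    using that accept_insert[OF A that(2)] not_mem_far_from[OF assms(2), of d "bob_output A v" Y]
    by (simp add: I_def accept_def)
  have "I {}"
    by (simp add: I_def separated_def)
  have "card {vs. set vs \<subseteq> scube d \<and> length vs = 20 * P \<and> card (greedy_packing r A vs) < P}
      \<le> real (card (scube d)) ^ (20 * P) * 2 ^ (P - card ({} :: vec set)) * (1 - (1 / 5) / 2) ^ (20 * P)"
    unfolding greedy_packing_def
    using card_lists_fold_greedy_insert_small_le[where \<Omega> = "scube d" and \<alpha> = "1 / 5" and I = I
        and acc = "accept r A" and f = "bob_output A" and Y = "{}" and N = "20 * P" and P = P,
        OF finite_scube _ _ dense grow _ \<open>I {}\<close>]
    by (simp add: I_def)
  also have "\<dots> = real (card (scube d)) ^ (20 * P) * (2 ^ P * (9 / 10) ^ (20 * P))"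
    by simp
  also have "\<dots> \<le> real (card (scube d)) ^ (20 * P) * (1 / 4)"
    using two_power_mult_nine_tenths_power_le[OF assms(4)] by (intro mult_left_mono) simp_all
  finally show ?thesis
    by simp
qed

lemma greedy_packing_subset_orth_entries:
  assumes "A \<in> mats d" "set vs \<subseteq> scube d"
  shows "greedy_packing r A vs \<subseteq> orth_entries d n eps X (Mf A) A (set vs)"
proof
  fix x assume "x \<in> greedy_packing r A vs"
  then obtain v Z where v: "v \<in> set vs" "accept r A v Z" "x = bob_output A v"
    using mem_fold_greedy_insertD unfolding greedy_packing_def by fastforce
  then have "v \<in> scube d" "orth_ok d eps A x"
    by (auto simp: accept_def succeeds_def bob_output_def Let_def)
  moreover have "x \<in> table d n X (Mf A) A (set vs)"
    unfolding table_def bob_output_def v(3)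
    using v(1) response_in_responses[OF assms(1) \<open>v \<in> scube d\<close>] by blast
  ultimately show "x \<in> orth_entries d n eps X (Mf A) A (set vs)"
    by (simp add: orth_entries_def)
qed

lemma exists_sample_set:
  assumes "protocol_succeeds d eps s Mf Rf X" "0 < r" "r \<le> sqrt (s / d)" "1 \<le> P"
    and small: "P * (2 * exp (- (d * (sqrt (s / d) - r)\<^sup>2) / 2)) \<le> 1 / 20"
  shows "\<exists>V \<subseteq> scube d. card V \<le> 20 * P \<and>
    card (mats d) / 4 \<le> card {A \<in> A_suc d eps s Mf Rf X. P \<le> packing_size d (orth_entries d n eps X (Mf A) A V) r}"
proof -
  define As where "As = A_suc d eps s Mf Rf X"
  define L where "L = {vs. set vs \<subseteq> scube d \<and> length vs = 20 * P}"
  have "As \<subseteq> mats d"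
    by (auto simp: As_def A_suc_def)
  then have "finite As"
    using finite_mats finite_subset by blast
  have "card (mats d) / 3 \<le> card As"
    using card_dense_rows_ge[OF finite_mats finite_scube] assms(1)
    by (simp add: As_def A_suc_def protocol_succeeds_def)
  have "finite L" "card L = card (scube d) ^ (20 * P)"
    unfolding L_def by (simp_all add: finite_lists_length_eq card_lists_length_eq finite_scube)
  obtain v where "v \<in> scube d"
    using card_scube[OF dim_pos] by fastforce
  then have "replicate (20 * P) v \<in> L"
    by (auto simp: L_def set_replicate_conv_if)
  then have "L \<noteq> {}"
    by blast
  have "real (card {vs \<in> L. card (greedy_packing r A vs) < P}) \<le> 1 / 4 * card L" if "A \<in> As" for A
  proof -
    have "{vs \<in> L. card (greedy_packing r A vs) < P}
        = {vs. set vs \<subseteq> scube d \<and> length vs = 20 * P \<and> card (greedy_packing r A vs) < P}"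
      by (auto simp: L_def)
    then show ?thesis
      using card_small_greedy_packing_le[OF _ assms(2-5), of A] that \<open>card L = _\<close>
      by (simp add: As_def)
  qed
  from exists_column_few_hits[of As L "\<lambda>A vs. card (greedy_packing r A vs) < P" "1 / 4", OF
      \<open>finite As\<close> \<open>finite L\<close> \<open>L \<noteq> {}\<close> this]
  obtain vs where vs: "vs \<in> L"
    and few: "real (card {A \<in> As. card (greedy_packing r A vs) < P}) \<le> 1 / 4 * card As"
    by blast
  define Good where
    "Good = {A \<in> As. P \<le> packing_size d (orth_entries d n eps X (Mf A) A (set vs)) r}"
  have "A \<in> Good" if "A \<in> As" "\<not> card (greedy_packing r A vs) < P" for A
  proof -
    have "A \<in> mats d" "set vs \<subseteq> scube d"
      using that(1) \<open>As \<subseteq> mats d\<close> vs by (auto simp: L_def)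
    then have "card (greedy_packing r A vs) \<le> packing_size d (orth_entries d n eps X (Mf A) A (set vs)) r"
      using greedy_packing_invariant greedy_packing_subset_orth_entries
      by (intro card_le_packing_size finite_orth_entries) auto
    then show ?thesis
      using that by (simp add: Good_def)
  qed
  then have split: "As \<subseteq> Good \<union> {A \<in> As. card (greedy_packing r A vs) < P}"
    by blast
  have "card As \<le> card Good + card {A \<in> As. card (greedy_packing r A vs) < P}"
    by (rule order_trans[OF card_mono[OF _ split] card_Un_le]) (simp add: Good_def \<open>finite As\<close>)
  then have "card (mats d) / 4 \<le> card Good"
    using few \<open>card (mats d) / 3 \<le> card As\<close> by linarith
  moreover have "card (set vs) \<le> 20 * P" "set vs \<subseteq> scube d"
    using vs card_length[of vs] by (auto simp: L_def)
  ultimately show ?thesis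
    unfolding Good_def As_def by blast
qed

end

lemma sample_parameters_for_large_d:
  assumes c1: "0 < c1" "c1 \<le> 1 / 10" and \<delta>: "\<delta> \<le> 1"
    and d: "16 \<le> ln (real d)" "2 / c1 \<le> ln (real d)" "4000000 \<le> d"
  defines "s \<equiv> s_par \<delta> d" and "P \<equiv> nat \<lceil>2 powr (s_par \<delta> d / ln (real d))\<rceil>"
    and "r \<equiv> real d powr (-8)"
  shows "2 powr (s / ln (real d)) \<le> real P" "1 \<le> P" "0 < r" "r \<le> sqrt (s / d)"
    and "real P * (2 * exp (- (d * (sqrt (s / d) - r)\<^sup>2) / 2)) \<le> 1 / 20"
    and "20 * real P \<le> 16 * s * exp (c1 * s)" "16 * s * exp (c1 * s) \<le> 2 powr s"
proof -
  define E where "E = 2 powr (s / ln (real d))"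
  have "2000 \<le> sqrt (real d)"
    using d(3) by (intro real_le_rsqrt) simp
  moreover have "sqrt (real d) \<le> s"
    using s_par_ge_sqrt[OF \<delta>, of d] d(1) by (simp add: s_def)
  ultimately have s: "2000 \<le> s"
    by linarith
  then show "16 * s * exp (c1 * s) \<le> 2 powr s"
    using c1(2) by (rule sixteen_mult_exp_le_two_powr)
  have E_le: "E \<le> exp (s / 16)" "E \<le> exp (c1 * s / 2)"
    using two_powr_divide_le_exp[of s 16 "ln d"] two_powr_divide_le_exp[of s "2 / c1" "ln d"] s d c1
    by (simp_all add: E_def mult.commute)
  have "0 < E"
    by (simp add: E_def)
  then have P: "E \<le> real P" "real P \<le> E + 1"
    by (simp_all add: P_def E_def s_def)
  then show "2 powr (s / ln (real d)) \<le> real P"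
    by (simp add: E_def)
  have "0 < real P"
    using P(1) \<open>0 < E\<close> by linarith
  then show "1 \<le> P"
    by simp
  show "20 * real P \<le> 16 * s * exp (c1 * s)"
    using twenty_mult_le_sixteen_mult_exp[OF s c1(1)] P(2) E_le(2) by simp
  have r: "0 < r" "r \<le> sqrt (s / d) / 2"
    using powr_neg_eight_le_half_sqrt[of d s] d(3) s by (simp_all add: r_def)
  moreover have "0 \<le> sqrt (s / d)"
    using s by simp
  ultimately show "0 < r" "r \<le> sqrt (s / d)"
    by linarith+
  have "exp (- (d * (sqrt (s / d) - r)\<^sup>2) / 2) \<le> exp (- s / 8)"
    using div_eight_le_sqrt_diff_square[of "real d" s r] r s d(3) by simp
  then have "real P * (2 * exp (- (d * (sqrt (s / d) - r)\<^sup>2) / 2)) \<le> real P * (2 * exp (- s / 8))"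
    by (intro mult_left_mono) simp_all
  also have "\<dots> \<le> 1 / 20"
    by (intro mult_two_exp_le_one_twentieth[OF s]) (use P(2) E_le(1) in linarith)
  finally show "real P * (2 * exp (- (d * (sqrt (s / d) - r)\<^sup>2) / 2)) \<le> 1 / 20" .
qed

lemma nice_matrices_many_for_large_d:
  assumes c1: "0 < c1" "c1 \<le> 1 / 10" and \<delta>: "\<delta> \<le> 1"
    and d: "even d" "16 \<le> ln (real d)" "2 / c1 \<le> ln (real d)" "4000000 \<le> d"
    and is_prot: "is_protocol d k n Mf Rf X" and succ: "protocol_succeeds d (xi' d) (s_par \<delta> d) Mf Rf X"
  shows "\<exists>V. V \<subseteq> scube d \<and>
          real (card V) \<le> 16 * s_par \<delta> d * exp (c1 * s_par \<delta> d) \<and>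
          16 * s_par \<delta> d * exp (c1 * s_par \<delta> d) \<le> 2 powr s_par \<delta> d \<and>
          real (card {A \<in> A_suc d (xi' d) (s_par \<delta> d) Mf Rf X.
                  real (packing_size d (orth_entries d n (xi' d) X (Mf A) A V) (real d powr (-8)))
                    \<ge> 2 powr (s_par \<delta> d / ln (real d))})
            \<ge> 1/8 * 2 powr (real d ^ 2 / 2)"
proof -
  define P where "P = nat \<lceil>2 powr (s_par \<delta> d / ln (real d))\<rceil>"
  define r where "r = real d powr (-8)"
  note par = sample_parameters_for_large_d[OF c1 \<delta> d(2-4), folded P_def r_def]
  interpret protocol_instance d k n Mf Rf X "xi' d" "s_par \<delta> d"
    by (rule protocol_instance.intro[OF is_prot]) (use d(4) in simp)
  let ?suc = "A_suc d (xi' d) (s_par \<delta> d) Mf Rf X"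
  obtain V where V: "V \<subseteq> scube d" "card V \<le> 20 * P"
    and many: "card (mats d) / 4 \<le> card {A \<in> ?suc. P \<le> packing_size d (orth_entries d n (xi' d) X (Mf A) A V) r}"
    using exists_sample_set[OF succ par(3,4,2,5)] by blast
  let ?nice = "{A \<in> ?suc.
    2 powr (s_par \<delta> d / ln (real d)) \<le> packing_size d (orth_entries d n (xi' d) X (Mf A) A V) r}"
  have "finite ?nice"
    by (rule finite_subset[OF _ finite_mats]) (auto simp: A_suc_def)
  moreover have "{A \<in> ?suc. P \<le> packing_size d (orth_entries d n (xi' d) X (Mf A) A V) r} \<subseteq> ?nice"
    using par(1) by auto
  ultimately have "card (mats d) / 4 \<le> card ?nice"
    using many by (smt (verit) card_mono of_nat_mono)
  moreover have "1 / 8 * 2 powr (real d ^ 2 / 2) \<le> card (mats d) / 4"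
    using card_mats_even[OF d(1)] by simp
  moreover have "real (card V) \<le> 16 * s_par \<delta> d * exp (c1 * s_par \<delta> d)"
    using V(2) par(6) by simp
  ultimately show ?thesis
    using V(1) par(7) unfolding r_def by (intro exI[of _ V]) auto
qed

lemma nice_matrices_many_eventually:
  assumes "0 < c1" "c1 \<le> 1 / 10" "\<delta> \<le> 1"
  shows "\<exists>D. \<forall>d\<ge>D. even d \<longrightarrow>
    (\<forall>(n::nat) Mf Rf X.
       is_protocol d (k d) n Mf Rf X \<and> protocol_succeeds d (xi' d) (s_par \<delta> d) Mf Rf X \<longrightarrow>
       (\<exists>V. V \<subseteq> scube d \<and>
          real (card V) \<le> 16 * s_par \<delta> d * exp (c1 * s_par \<delta> d) \<and>
          16 * s_par \<delta> d * exp (c1 * s_par \<delta> d) \<le> 2 powr s_par \<delta> d \<and>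
          real (card {A \<in> A_suc d (xi' d) (s_par \<delta> d) Mf Rf X.
                  real (packing_size d (orth_entries d n (xi' d) X (Mf A) A V) (real d powr (-8)))
                    \<ge> 2 powr (s_par \<delta> d / ln (real d))})
            \<ge> 1/8 * 2 powr (real d ^ 2 / 2)))"
proof (intro exI[of _ "max 4000000 (nat \<lceil>exp (max 16 (2 / c1))\<rceil>)"] allI impI)
  fix d n Mf Rf X
  assume "max 4000000 (nat \<lceil>exp (max 16 (2 / c1))\<rceil>) \<le> d" "even d"
    and "is_protocol d (k d) n Mf Rf X \<and> protocol_succeeds d (xi' d) (s_par \<delta> d) Mf Rf X"
  moreover from this(1) have "exp (max 16 (2 / c1)) \<le> real d"
    by (meson le_trans max.boundedE nat_ceiling_le_eq of_nat_le_iff)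
  then have "max 16 (2 / c1) \<le> ln (real d)"
    by (metis exp_gt_zero ln_exp ln_le_cancel_iff order_less_le_trans)
  ultimately show "\<exists>V. V \<subseteq> scube d \<and>
          real (card V) \<le> 16 * s_par \<delta> d * exp (c1 * s_par \<delta> d) \<and>
          16 * s_par \<delta> d * exp (c1 * s_par \<delta> d) \<le> 2 powr s_par \<delta> d \<and>
          real (card {A \<in> A_suc d (xi' d) (s_par \<delta> d) Mf Rf X.
                  real (packing_size d (orth_entries d n (xi' d) X (Mf A) A V) (real d powr (-8)))
                    \<ge> 2 powr (s_par \<delta> d / ln (real d))})
            \<ge> 1/8 * 2 powr (real d ^ 2 / 2)"
    using assms by (intro nice_matrices_many_for_large_d) auto
qed

theorem lemma5p5:
  shows "\<exists>c0>0. \<forall>c1::real. 0 < c1 \<and> c1 \<le> c0 \<longrightarrow>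
    (\<forall>\<delta>::real. 0 < \<delta> \<and> \<delta> < 1 \<longrightarrow>
    (\<forall>(k::nat \<Rightarrow> nat) (o1::nat \<Rightarrow> real).
       o1 \<longlonglongrightarrow> 0 \<and> (\<forall>d\<ge>2. real (k d) = real d powr (1 - \<delta> - o1 d)) \<longrightarrow>
    (\<exists>D. \<forall>d\<ge>D. even d \<longrightarrow>
    (\<forall>(n::nat) Mf Rf X.
       is_protocol d (k d) n Mf Rf X \<and> protocol_succeeds d (xi' d) (s_par \<delta> d) Mf Rf X \<longrightarrow>
       (\<exists>V. V \<subseteq> scube d \<and>
          real (card V) \<le> 16 * s_par \<delta> d * exp (c1 * s_par \<delta> d) \<and>
          16 * s_par \<delta> d * exp (c1 * s_par \<delta> d) \<le> 2 powr s_par \<delta> d \<and>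
          real (card {A \<in> A_suc d (xi' d) (s_par \<delta> d) Mf Rf X.
                  real (packing_size d (orth_entries d n (xi' d) X (Mf A) A V) (real d powr (-8)))
                    \<ge> 2 powr (s_par \<delta> d / ln (real d))})
            \<ge> 1/8 * 2 powr (real d ^ 2 / 2))))))"
  using nice_matrices_many_eventually by (intro exI[of _ "1 / 10"]) auto

end
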